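(* Let $D$ be a spatial graph diagram and consider any Wirtinger coloring process on its truncated diagram, i.e. a sequence of stages $(A_0,f_0)\to(A_1,f_1)\to\cdots$ where $A_0$ is the set of seed strands and each subsequent stage is obtained by one coloring move. Then at every stage, for each color $c$, the set of strands colored $c$ is either (1) a single connected arc, if the seed of color $c$ is a single strand, or (2) a union of $n$ disjoint arcs, if the seed of color $c$ is the set of strands at a deleted vertex of degree $n$.
   Context: A spatial graph diagram $D$ is a generic planar projection of a spatial graph with crossing information. Its truncated diagram is obtained by deleting all vertices of degree $>2$, leaving free ends. A strand is an arc connecting an undercrossing to a free end, or connecting two undercrossings. A coloring process starts with $k$ seeds, each colored with its own color: a seed is either a single strand or the set of all strands incident to one deleted vertex (a "pod", all such strands getting the same color). At stage $i$, $A_i$ is the set of colored strands and $f_i\colon A_i\to\{\text{colors}\}$ the coloring. A coloring move: at a crossing whose overstrand is colored and one of whose two understrands is colored, color the other understrand with the color of that colored understrand; thus $A_{i+1}=A_i\cup\{s\}$ for one new strand $s$. *)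

theory Defs
  imports Main
begin

text \<open>S  : the strands;  X : the crossings, with overstrand ov x and the two
  understrands u1 x, u2 x (the two arcs ending at the undercrossing of x);
  E  : the free ends created by deleting vertices (and endpoints of degree 1);
  es e is the strand on which the free end e lies, ev e the (original) vertex
  it came from.  Every strand has exactly two endpoints, each of which is
  either an undercrossing or a free end.\<close>

definition diagram ::
  "'s set \<Rightarrow> 'x set \<Rightarrow> ('x \<Rightarrow> 's) \<Rightarrow> ('x \<Rightarrow> 's) \<Rightarrow> ('x \<Rightarrow> 's)
   \<Rightarrow> 'e set \<Rightarrow> ('e \<Rightarrow> 's) \<Rightarrow> ('e \<Rightarrow> 'v) \<Rightarrow> bool" where
  "diagram S X ov u1 u2 E es ev \<longleftrightarrow>
     finite S \<and> finite X \<and> finite E \<and>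
     (\<forall>x\<in>X. ov x \<in> S \<and> u1 x \<in> S \<and> u2 x \<in> S) \<and>
     (\<forall>e\<in>E. es e \<in> S) \<and>
     (\<forall>s\<in>S. card {x\<in>X. u1 x = s} + card {x\<in>X. u2 x = s} + card {e\<in>E. es e = s} = 2)"

definition vdegree :: "'e set \<Rightarrow> ('e \<Rightarrow> 'v) \<Rightarrow> 'v \<Rightarrow> nat" where
  "vdegree E ev v = card {e\<in>E. ev e = v}"

definition pod :: "'e set \<Rightarrow> ('e \<Rightarrow> 's) \<Rightarrow> ('e \<Rightarrow> 'v) \<Rightarrow> 'v \<Rightarrow> 's set" where
  "pod E es ev v = es ` {e\<in>E. ev e = v}"

definition joined :: "'x set \<Rightarrow> ('x \<Rightarrow> 's) \<Rightarrow> ('x \<Rightarrow> 's) \<Rightarrow> 's \<Rightarrow> 's \<Rightarrow> bool" where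
  "joined X u1 u2 s t \<longleftrightarrow> (\<exists>x\<in>X. (u1 x = s \<and> u2 x = t) \<or> (u1 x = t \<and> u2 x = s))"

definition is_arc :: "'x set \<Rightarrow> ('x \<Rightarrow> 's) \<Rightarrow> ('x \<Rightarrow> 's) \<Rightarrow> 's set \<Rightarrow> bool" where
  "is_arc X u1 u2 K \<longleftrightarrow>
     (\<exists>xs. xs \<noteq> [] \<and> distinct xs \<and> set xs = K \<and>
        (\<forall>i. Suc i < length xs \<longrightarrow> joined X u1 u2 (xs ! i) (xs ! Suc i)))"

definition union_of_disjoint_arcs ::
  "'x set \<Rightarrow> ('x \<Rightarrow> 's) \<Rightarrow> ('x \<Rightarrow> 's) \<Rightarrow> nat \<Rightarrow> 's set \<Rightarrow> bool" where
  "union_of_disjoint_arcs X u1 u2 n K \<longleftrightarrow>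
     (\<exists>B :: nat \<Rightarrow> 's set.
        (\<forall>j<n. is_arc X u1 u2 (B j)) \<and>
        (\<forall>j<n. \<forall>l<n. j \<noteq> l \<longrightarrow> B j \<inter> B l = {}) \<and>
        (\<Union>j<n. B j) = K)"

definition coloring_move ::
  "'s set \<Rightarrow> 'x set \<Rightarrow> ('x \<Rightarrow> 's) \<Rightarrow> ('x \<Rightarrow> 's) \<Rightarrow> ('x \<Rightarrow> 's)
   \<Rightarrow> 's set \<Rightarrow> ('s \<Rightarrow> 'c) \<Rightarrow> 's set \<Rightarrow> ('s \<Rightarrow> 'c) \<Rightarrow> bool" where
  "coloring_move S X ov u1 u2 A f A' f' \<longleftrightarrow>
     (\<exists>s\<in>S. s \<notin> A \<and> A' = insert s A \<and> (\<forall>t\<in>A. f' t = f t) \<and>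
        (\<exists>x\<in>X. ov x \<in> A \<and>
           ((u1 x \<in> A \<and> u2 x = s \<and> f' s = f (u1 x)) \<or>
            (u2 x \<in> A \<and> u1 x = s \<and> f' s = f (u2 x)))))"

end

theory Submission
  imports Defs
begin

text \<open>Each color class stays a union of as many disjoint arcs as its seed has strands: initially
  these arcs are single strands, and a move adds a strand s joined at an undercrossing to some
  strand t of the class. Since every strand has only two endpoints, t is joined to at most two
  other strands, so t cannot lie in the interior of its arc; hence s extends that arc at one end.\<close>

lemma successively_iff_nth:
  "successively P xs \<longleftrightarrow> (\<forall>i. Suc i < length xs \<longrightarrow> P (xs ! i) (xs ! Suc i))"
proof (induction P xs rule: successively.induct)
  case (3 P x y xs)
  then show ?case
    by (auto simp: nth_Cons split: nat.splits)
qed auto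

lemma is_arc_iff_successively:
  "is_arc X u1 u2 K \<longleftrightarrow>
     (\<exists>xs. xs \<noteq> [] \<and> distinct xs \<and> set xs = K \<and> successively (joined X u1 u2) xs)"
  unfolding is_arc_def successively_iff_nth ..

lemma is_arc_singleton: "is_arc X u1 u2 {s}"
  unfolding is_arc_iff_successively by (intro exI[of _ "[s]"]) simp

lemma joined_commute: "joined X u1 u2 s t \<longleftrightarrow> joined X u1 u2 t s"
  unfolding joined_def by blast

lemma diagram_card_undercrossings_le:
  assumes "diagram S X ov u1 u2 E es ev" and "t \<in> S"
  shows "card {x\<in>X. u1 x = t \<or> u2 x = t} \<le> 2"
proof -
  have "{x\<in>X. u1 x = t \<or> u2 x = t} = {x\<in>X. u1 x = t} \<union> {x\<in>X. u2 x = t}" by blast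
  also have "card \<dots> \<le> card {x\<in>X. u1 x = t} + card {x\<in>X. u2 x = t}" by (rule card_Un_le)
  also have "\<dots> \<le> 2" using assms unfolding diagram_def by fastforce
  finally show ?thesis .
qed

lemma diagram_joined_at_most_two:
  assumes dg: "diagram S X ov u1 u2 E es ev"
    and "joined X u1 u2 t a" "joined X u1 u2 t b" "joined X u1 u2 t c"
  shows "a = b \<or> a = c \<or> b = c"
proof (rule ccontr)
  assume distinct: "\<not> (a = b \<or> a = c \<or> b = c)"
  have crossing: "\<exists>x\<in>X. {u1 x, u2 x} = {t, s}" if "joined X u1 u2 t s" for s
    using that unfolding joined_def doubleton_eq_iff by blast
  obtain xa where xa: "xa \<in> X" "{u1 xa, u2 xa} = {t, a}" using crossing[OF assms(2)] by blast
  obtain xb where xb: "xb \<in> X" "{u1 xb, u2 xb} = {t, b}" using crossing[OF assms(3)] by blast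
  obtain xc where xc: "xc \<in> X" "{u1 xc, u2 xc} = {t, c}" using crossing[OF assms(4)] by blast
  note crossings = xa(1) xb(1) xc(1) xa(2) xb(2) xc(2)
  have at_t: "u1 x = t \<or> u2 x = t" if "{u1 x, u2 x} = {t, s}" for x s
    using that by (metis insertCI insertE singletonD)
  have "u1 xa \<in> S" "u2 xa \<in> S" using dg crossings(1) by (simp_all add: diagram_def)
  then have "t \<in> S" using at_t[OF crossings(4)] by blast
  have "{t, a} \<noteq> {t, b}" "{t, a} \<noteq> {t, c}" "{t, b} \<noteq> {t, c}"
    using distinct by (auto simp: doubleton_eq_iff)
  then have "xa \<noteq> xb" "xa \<noteq> xc" "xb \<noteq> xc" using crossings(4-6) by metis+
  then have "card {xa, xb, xc} = 3" by simp
  moreover have "card {xa, xb, xc} \<le> card {x\<in>X. u1 x = t \<or> u2 x = t}"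
  proof (rule card_mono)
    show "finite {x\<in>X. u1 x = t \<or> u2 x = t}" using dg by (simp add: diagram_def)
    show "{xa, xb, xc} \<subseteq> {x\<in>X. u1 x = t \<or> u2 x = t}"
      using crossings(1-3) at_t[OF crossings(4)] at_t[OF crossings(5)] at_t[OF crossings(6)] by blast
  qed
  ultimately show False using diagram_card_undercrossings_le[OF dg \<open>t \<in> S\<close>] by linarith
qed

lemma is_arc_insert:
  assumes dg: "diagram S X ov u1 u2 E es ev" and arc: "is_arc X u1 u2 K"
    and "t \<in> K" "s \<notin> K" and ts: "joined X u1 u2 t s"
  shows "is_arc X u1 u2 (insert s K)"
proof -
  obtain xs where xs: "distinct xs" "set xs = K" "successively (joined X u1 u2) xs"
    using arc unfolding is_arc_iff_successively by blast
  then obtain ys zs where split: "xs = ys @ t # zs" using \<open>t \<in> K\<close> by (metis split_list)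
  have chain: "successively (joined X u1 u2) ys" "successively (joined X u1 u2) (t # zs)"
    "ys \<noteq> [] \<Longrightarrow> joined X u1 u2 (last ys) t"
    using xs(3) unfolding split successively_append_iff by auto
  have "ys = [] \<or> zs = []"
  proof (rule ccontr)
    assume "\<not> (ys = [] \<or> zs = [])"
    then have "ys \<noteq> []" "zs \<noteq> []" by simp_all
    have "joined X u1 u2 t (last ys)" "joined X u1 u2 t (hd zs)"
      using chain \<open>ys \<noteq> []\<close> \<open>zs \<noteq> []\<close> by (auto simp: joined_commute successively_Cons)
    moreover have "last ys \<noteq> hd zs" "last ys \<noteq> s" "hd zs \<noteq> s"
      using xs(1,2) \<open>s \<notin> K\<close> last_in_set[OF \<open>ys \<noteq> []\<close>] hd_in_set[OF \<open>zs \<noteq> []\<close>]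
      unfolding split by auto
    ultimately show False using diagram_joined_at_most_two[OF dg _ _ ts] by blast
  qed
  then show ?thesis
  proof
    assume "ys = []"
    then have "successively (joined X u1 u2) (s # xs)"
      using xs(3) ts split by (simp add: joined_commute)
    then show ?thesis
      unfolding is_arc_iff_successively using xs \<open>s \<notin> K\<close> by (intro exI[of _ "s # xs"]) auto
  next
    assume "zs = []"
    then have "successively (joined X u1 u2) (xs @ [s])"
      using xs(3) ts split by (simp add: successively_append_iff)
    then show ?thesis
      unfolding is_arc_iff_successively using xs \<open>s \<notin> K\<close> by (intro exI[of _ "xs @ [s]"]) auto
  qed
qed

lemma union_of_disjoint_arcs_insert:
  assumes dg: "diagram S X ov u1 u2 E es ev" and U: "union_of_disjoint_arcs X u1 u2 n K"
    and "t \<in> K" "s \<notin> K" and ts: "joined X u1 u2 t s"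
  shows "union_of_disjoint_arcs X u1 u2 n (insert s K)"
proof -
  obtain B where B: "\<forall>j<n. is_arc X u1 u2 (B j)" "\<forall>j<n. \<forall>l<n. j \<noteq> l \<longrightarrow> B j \<inter> B l = {}"
    "(\<Union>j<n. B j) = K"
    using U unfolding union_of_disjoint_arcs_def by blast
  obtain j where j: "j < n" "t \<in> B j" using B(3) \<open>t \<in> K\<close> by blast
  have s_new: "s \<notin> B l" if "l < n" for l using B(3) \<open>s \<notin> K\<close> that by blast
  define B' where "B' = B(j := insert s (B j))"
  have "\<forall>l<n. is_arc X u1 u2 (B' l)"
    using B(1) is_arc_insert[OF dg _ j(2) s_new[OF j(1)] ts] j unfolding B'_def by auto
  moreover have "\<forall>l<n. \<forall>m<n. l \<noteq> m \<longrightarrow> B' l \<inter> B' m = {}"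
    using B(2) s_new unfolding B'_def by auto
  moreover have "(\<Union>l<n. B' l) = insert s K"
    using B(3) j unfolding B'_def by (auto split: if_splits)
  ultimately show ?thesis unfolding union_of_disjoint_arcs_def by blast
qed

lemma union_of_disjoint_arcs_singletons:
  assumes "finite K"
  shows "union_of_disjoint_arcs X u1 u2 (card K) K"
proof -
  obtain h where h: "bij_betw h {..<card K} K"
    using ex_bij_betw_nat_finite[OF assms] by (auto simp: lessThan_atLeast0)
  show ?thesis
    unfolding union_of_disjoint_arcs_def
  proof (intro exI[of _ "\<lambda>j. {h j}"] conjI)
    show "\<forall>j<card K. \<forall>l<card K. j \<noteq> l \<longrightarrow> {h j} \<inter> {h l} = {}"
      using h unfolding bij_betw_def inj_on_def by auto
    show "(\<Union>j<card K. {h j}) = K"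
      using h unfolding bij_betw_def by auto
  qed (simp add: is_arc_singleton)
qed

lemma union_of_one_arc_is_arc:
  "union_of_disjoint_arcs X u1 u2 1 K \<Longrightarrow> is_arc X u1 u2 K"
  unfolding union_of_disjoint_arcs_def by (auto simp: lessThan_Suc)

lemma coloring_move_color_class:
  assumes "coloring_move S X ov u1 u2 A f A' f'"
  obtains "{t\<in>A'. f' t = c} = {t\<in>A. f t = c}"
  | s t where "t \<in> {t\<in>A. f t = c}" "s \<notin> {t\<in>A. f t = c}" "joined X u1 u2 t s"
      "{t\<in>A'. f' t = c} = insert s {t\<in>A. f t = c}"
proof -
  obtain s x where s: "s \<notin> A" "A' = insert s A" "\<forall>t\<in>A. f' t = f t"
    and x: "x \<in> X" "(u1 x \<in> A \<and> u2 x = s \<and> f' s = f (u1 x)) \<or>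
                      (u2 x \<in> A \<and> u1 x = s \<and> f' s = f (u2 x))"
    using assms unfolding coloring_move_def by blast
  then obtain t where t: "t \<in> A" "f' s = f t" "joined X u1 u2 t s"
    unfolding joined_def by blast
  show thesis
  proof (cases "f' s = c")
    case True
    then have "{t\<in>A'. f' t = c} = insert s {t\<in>A. f t = c}" using s by auto
    then show thesis using that(2) t True s(1) by auto
  next
    case False
    then have "{t\<in>A'. f' t = c} = {t\<in>A. f t = c}" using s by auto
    then show thesis using that(1) by blast
  qed
qed

lemma coloring_move_union_of_disjoint_arcs:
  assumes "diagram S X ov u1 u2 E es ev"
    and "coloring_move S X ov u1 u2 A f A' f'"
    and "union_of_disjoint_arcs X u1 u2 n {t\<in>A. f t = c}"
  shows "union_of_disjoint_arcs X u1 u2 n {t\<in>A'. f' t = c}"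
  using assms(2)
proof (cases rule: coloring_move_color_class[where c = c])
  case 1
  then show ?thesis using assms(3) by simp
next
  case (2 s t)
  then show ?thesis using union_of_disjoint_arcs_insert[OF assms(1,3)] by simp
qed

lemma coloring_process_union_of_disjoint_arcs:
  assumes "diagram S X ov u1 u2 E es ev"
    and "\<forall>i<N. coloring_move S X ov u1 u2 (A i) (f i) (A (Suc i)) (f (Suc i))"
    and "union_of_disjoint_arcs X u1 u2 n {t\<in>A 0. f 0 t = c}"
    and "i \<le> N"
  shows "union_of_disjoint_arcs X u1 u2 n {t\<in>A i. f i t = c}"
  using assms(4)
proof (induction i)
  case (Suc i)
  then have "coloring_move S X ov u1 u2 (A i) (f i) (A (Suc i)) (f (Suc i))"
    using assms(2) by simp
  then show ?case using coloring_move_union_of_disjoint_arcs[OF assms(1)] Suc by simp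
qed (use assms(3) in simp)

theorem lemma3p1:
  fixes S :: "'s set" and X :: "'x set" and ov u1 u2 :: "'x \<Rightarrow> 's"
    and E :: "'e set" and es :: "'e \<Rightarrow> 's" and ev :: "'e \<Rightarrow> 'v"
    and C :: "'c set" and seed :: "'c \<Rightarrow> 's set"
    and A :: "nat \<Rightarrow> 's set" and f :: "nat \<Rightarrow> 's \<Rightarrow> 'c" and N :: nat
  assumes "diagram S X ov u1 u2 E es ev"
    and "finite C"
    and "\<forall>c\<in>C. (\<exists>s\<in>S. seed c = {s}) \<or>
                 (\<exists>v. 2 < vdegree E ev v \<and> seed c = pod E es ev v)"
    and "A 0 = (\<Union>c\<in>C. seed c)"
    and "\<forall>c\<in>C. \<forall>s\<in>seed c. f 0 s = c"
    and "\<forall>i<N. coloring_move S X ov u1 u2 (A i) (f i) (A (Suc i)) (f (Suc i))"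
  shows "\<forall>i\<le>N. \<forall>c\<in>C.
           (\<forall>s\<in>S. seed c = {s} \<longrightarrow> is_arc X u1 u2 {t\<in>A i. f i t = c}) \<and>
           (\<forall>v. 2 < vdegree E ev v \<and> seed c = pod E es ev v \<longrightarrow>
                union_of_disjoint_arcs X u1 u2 (card (pod E es ev v)) {t\<in>A i. f i t = c})"
proof (intro allI impI ballI)
  fix i c assume "i \<le> N" and "c \<in> C"
  have "finite E" using assms(1) unfolding diagram_def by blast
  then have "finite (seed c)" using assms(3) \<open>c \<in> C\<close> unfolding pod_def by auto
  moreover have "{t\<in>A 0. f 0 t = c} = seed c" using assms(4,5) \<open>c \<in> C\<close> by auto
  ultimately have "union_of_disjoint_arcs X u1 u2 (card (seed c)) {t\<in>A 0. f 0 t = c}"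
    using union_of_disjoint_arcs_singletons by simp
  then have "union_of_disjoint_arcs X u1 u2 (card (seed c)) {t\<in>A i. f i t = c}"
    using coloring_process_union_of_disjoint_arcs[OF assms(1,6) _ \<open>i \<le> N\<close>] by blast
  then show "(\<forall>s\<in>S. seed c = {s} \<longrightarrow> is_arc X u1 u2 {t\<in>A i. f i t = c}) \<and>
      (\<forall>v. 2 < vdegree E ev v \<and> seed c = pod E es ev v \<longrightarrow>
         union_of_disjoint_arcs X u1 u2 (card (pod E es ev v)) {t\<in>A i. f i t = c})"
    using union_of_one_arc_is_arc by (intro conjI allI ballI impI) simp_all
qed

end
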